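(* Let $G=(V,E)$ be a finite directed acyclic graph, $G'=(V,E')$ its minimum equivalent graph, $S$ a set of streams, and $f:V\to S$ a stream assignment satisfying maximum logical concurrency on $G$. Then $\mathrm{min}_{sync}(G,f)=\mathrm{min}_{sync}(G',f)$.
   Context: A path from $u$ to $v$ in a directed graph is a nonempty sequence of edges $(u,w_1),\dots,(w_k,v)$ of that graph. The minimum equivalent graph (MEG) of a finite DAG $G=(V,E)$ is the subgraph $G'=(V,E')$, $E'\subseteq E$, with the same vertex set and the smallest number of edges among subgraphs having the same reachability relation as $G$. A stream assignment is any function $f:V\to S$. It satisfies maximum logical concurrency on a graph $H$ with vertex set $V$ if for all distinct $u,v$ with no path between them in either direction in $H$, $f(u)\neq f(v)$. For a directed graph $H=(V,E_H)$, a synchronization plan $\Lambda\subseteq E_H$ is safe for $f$ on $H$ if for every edge $(u,v)\in E_H$, either $f(u)=f(v)$ or there is a path $P\subseteq E_H$ from $u$ to $v$ with $P\cap\Lambda\neq\emptyset$. Define $\mathrm{min}_{sync}(H,f)=\min\{|\Lambda| : \Lambda\subseteq E_H \text{ is safe for } f \text{ on } H\}$. *)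

theory Defs
  imports Main
begin

definition is_path :: "('a \<times> 'a) set \<Rightarrow> 'a \<Rightarrow> 'a \<Rightarrow> ('a \<times> 'a) list \<Rightarrow> bool" where
  "is_path E u v P \<longleftrightarrow> P \<noteq> [] \<and> set P \<subseteq> E \<and> fst (hd P) = u \<and> snd (last P) = v \<and>
     (\<forall>i. Suc i < length P \<longrightarrow> snd (P ! i) = fst (P ! Suc i))"

definition reach :: "('a \<times> 'a) set \<Rightarrow> 'a \<Rightarrow> 'a \<Rightarrow> bool" where
  "reach E u v \<longleftrightarrow> (\<exists>P. is_path E u v P)"

definition finite_dag :: "'a set \<Rightarrow> ('a \<times> 'a) set \<Rightarrow> bool" where
  "finite_dag V E \<longleftrightarrow> finite V \<and> E \<subseteq> V \<times> V \<and> acyclic E"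

definition is_MEG :: "('a \<times> 'a) set \<Rightarrow> ('a \<times> 'a) set \<Rightarrow> bool" where
  "is_MEG E E' \<longleftrightarrow> E' \<subseteq> E \<and> reach E' = reach E \<and>
     (\<forall>E''. E'' \<subseteq> E \<and> reach E'' = reach E \<longrightarrow> card E' \<le> card E'')"

definition max_logical_concurrency :: "'a set \<Rightarrow> ('a \<times> 'a) set \<Rightarrow> ('a \<Rightarrow> 's) \<Rightarrow> bool" where
  "max_logical_concurrency V E f \<longleftrightarrow>
     (\<forall>u\<in>V. \<forall>v\<in>V. u \<noteq> v \<and> \<not> reach E u v \<and> \<not> reach E v u \<longrightarrow> f u \<noteq> f v)"

definition safe_sync :: "('a \<times> 'a) set \<Rightarrow> ('a \<Rightarrow> 's) \<Rightarrow> ('a \<times> 'a) set \<Rightarrow> bool" where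
  "safe_sync E f L \<longleftrightarrow> L \<subseteq> E \<and>
     (\<forall>(u, v)\<in>E. f u = f v \<or> (\<exists>P. is_path E u v P \<and> set P \<inter> L \<noteq> {}))"

definition min_sync :: "('a \<times> 'a) set \<Rightarrow> ('a \<Rightarrow> 's) \<Rightarrow> nat" where
  "min_sync E f = Min {card L | L. safe_sync E f L}"

end

theory Submission
  imports Defs
begin

text \<open>In a finite DAG the minimum equivalent graph E' is the transitive reduction: an
  edge of E' admits no other path in E, since otherwise deleting it would keep the
  reachability relation with fewer edges. Hence, in both E and E', a cross-stream edge
  of E' can only be protected by synchronizing on that very edge, so every safe plan
  contains the cross-stream edges of E'. Conversely these edges alone form a safe plan
  for both graphs, because any path between different streams changes streams along
  some edge, and every edge of E is bridged by a path in E'. Both minima therefore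
  equal the number of cross-stream edges of E'.\<close>

definition stream_crossings :: "('a \<times> 'a) set \<Rightarrow> ('a \<Rightarrow> 's) \<Rightarrow> ('a \<times> 'a) set" where
  "stream_crossings E f = {(a, b) \<in> E. f a \<noteq> f b}"

lemma is_path_Cons:
  "is_path E u v (e # Q) \<longleftrightarrow>
     e \<in> E \<and> fst e = u \<and> (if Q = [] then snd e = v else is_path E (snd e) v Q)"
proof (cases Q)
  case Nil
  then show ?thesis by (auto simp: is_path_def)
next
  case (Cons q Q')
  have "(\<forall>i. Suc i < length (e # Q) \<longrightarrow> snd ((e # Q) ! i) = fst ((e # Q) ! Suc i)) \<longleftrightarrow>
        snd e = fst q \<and> (\<forall>i. Suc i < length Q \<longrightarrow> snd (Q ! i) = fst (Q ! Suc i))"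
    using Cons by (auto simp: All_less_Suc2)
  then show ?thesis using Cons by (auto simp: is_path_def)
qed

lemma is_path_single [simp]: "is_path E u v [(u, v)] \<longleftrightarrow> (u, v) \<in> E"
  by (simp add: is_path_Cons)

lemma is_path_mono: "is_path E u v P \<Longrightarrow> E \<subseteq> F \<Longrightarrow> is_path F u v P"
  by (auto simp: is_path_def)

lemma is_path_ConsI:
  assumes "is_path E y v Q" and "(x, y) \<in> E"
  shows "is_path E x v ((x, y) # Q)"
proof -
  have "Q \<noteq> []" using assms(1) by (simp add: is_path_def)
  then show ?thesis using assms by (simp add: is_path_Cons)
qed

lemma is_path_imp_trancl: "is_path E u v P \<Longrightarrow> (u, v) \<in> E\<^sup>+"
proof (induction P arbitrary: u)
  case Nil
  then show ?case by (simp add: is_path_def)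
next
  case (Cons e Q)
  then show ?case
    by (cases e) (auto simp: is_path_Cons split: if_splits intro: trancl_into_trancl2)
qed

lemma trancl_imp_is_path: "(u, v) \<in> E\<^sup>+ \<Longrightarrow> \<exists>P. is_path E u v P"
proof (induction rule: converse_trancl_induct)
  case (base y)
  then show ?case by (metis is_path_single)
next
  case (step x y)
  then show ?case by (metis is_path_ConsI)
qed

lemma reach_iff_trancl: "reach E u v \<longleftrightarrow> (u, v) \<in> E\<^sup>+"
  unfolding reach_def using is_path_imp_trancl trancl_imp_is_path by metis

lemma trancl_Diff_edge:
  "(x, y) \<in> R\<^sup>+ \<Longrightarrow> (x, y) \<in> (R - {(a, b)})\<^sup>+ \<or> (x, a) \<in> R\<^sup>* \<and> (b, y) \<in> R\<^sup>*"
proof (induction rule: trancl_induct)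
  case (base y)
  then show ?case by (cases "(x, y) = (a, b)") auto
next
  case (step y z)
  then show ?case
    by (cases "(y, z) = (a, b)")
      (auto dest: trancl_into_rtrancl intro: rtrancl_into_rtrancl trancl_into_trancl)
qed

lemma is_MEG_trancl:
  assumes "is_MEG E E'"
  shows "E' \<subseteq> E" and "E'\<^sup>+ = E\<^sup>+"
    and "\<And>E''. E'' \<subseteq> E \<Longrightarrow> E''\<^sup>+ = E\<^sup>+ \<Longrightarrow> card E' \<le> card E''"
proof -
  have reach_eq: "reach F = reach G \<longleftrightarrow> F\<^sup>+ = G\<^sup>+" for F G :: "('a \<times> 'a) set"
    by (auto simp: fun_eq_iff reach_iff_trancl)
  from assms show "E' \<subseteq> E" "E'\<^sup>+ = E\<^sup>+"
    and "\<And>E''. E'' \<subseteq> E \<Longrightarrow> E''\<^sup>+ = E\<^sup>+ \<Longrightarrow> card E' \<le> card E''"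
    by (auto simp: is_MEG_def reach_eq)
qed

text \<open>Acyclicity is what keeps the detour u \<rightarrow> w \<rightarrow> v from passing through the
  deleted edge (u, v) itself.\<close>
lemma MEG_edge_no_detour:
  assumes "acyclic E" "finite E" "is_MEG E E'"
    and uv: "(u, v) \<in> E'" and uw: "(u, w) \<in> E\<^sup>+" and wv: "(w, v) \<in> E\<^sup>+"
  shows False
proof -
  note E' = is_MEG_trancl[OF assms(3)]
  define E'' where "E'' = E' - {(u, v)}"
  have no_cycle: "(x, x) \<notin> E'\<^sup>+" for x
    using \<open>acyclic E\<close> E'(2) by (simp add: acyclic_def)
  have "(u, w) \<in> E''\<^sup>+"
  proof -
    have "(v, w) \<notin> E'\<^sup>*"
      using no_cycle wv E'(2) by (metis rtrancl_trancl_trancl)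
    then show ?thesis
      using trancl_Diff_edge[of u w E' u v] uw E'(2) unfolding E''_def by blast
  qed
  moreover have "(w, v) \<in> E''\<^sup>+"
  proof -
    have "(w, u) \<notin> E'\<^sup>*"
      using no_cycle uw E'(2) by (metis trancl_rtrancl_trancl)
    then show ?thesis
      using trancl_Diff_edge[of w v E' u v] wv E'(2) unfolding E''_def by blast
  qed
  ultimately have "(u, v) \<in> E''\<^sup>+" by (rule trancl_trans)
  then have "E' \<subseteq> E''\<^sup>+" unfolding E''_def by auto
  then have "E'\<^sup>+ \<subseteq> E''\<^sup>+"
    using trancl_mono_subset[of E' "E''\<^sup>+"] by simp
  moreover have "E''\<^sup>+ \<subseteq> E'\<^sup>+" unfolding E''_def by (rule trancl_mono_subset) auto
  ultimately have "E''\<^sup>+ = E\<^sup>+" using E'(2) by blast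
  moreover have "E'' \<subseteq> E" using E'(1) unfolding E''_def by blast
  ultimately have "card E' \<le> card E''" using E'(3) by blast
  moreover have "card E'' < card E'"
    unfolding E''_def using uv E'(1) \<open>finite E\<close> by (meson card_Diff1_less finite_subset)
  ultimately show False by simp
qed

lemma MEG_edge_unique_path:
  assumes "acyclic E" "finite E" "is_MEG E E'"
    and "(u, v) \<in> E'" and P: "is_path E u v P"
  shows "P = [(u, v)]"
proof (cases P)
  case Nil
  then show ?thesis using P by (simp add: is_path_def)
next
  case (Cons e Q)
  show ?thesis
  proof (cases "Q = []")
    case True
    then show ?thesis using P Cons by (cases e) (simp add: is_path_Cons)
  next
    case False
    then have "(u, snd e) \<in> E\<^sup>+" "(snd e, v) \<in> E\<^sup>+"
      using P Cons by (auto simp: is_path_Cons dest: is_path_imp_trancl)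
    then show ?thesis using MEG_edge_no_detour[OF assms(1-4)] by blast
  qed
qed

lemma trancl_path_crossing:
  assumes "(u, v) \<in> E\<^sup>+" and "f u \<noteq> f v"
  shows "\<exists>P. is_path E u v P \<and> set P \<inter> stream_crossings E f \<noteq> {}"
  using assms
proof (induction rule: converse_trancl_induct)
  case (base y)
  then have "(y, v) \<in> set [(y, v)] \<inter> stream_crossings E f"
    by (simp add: stream_crossings_def)
  with base show ?case by (metis emptyE is_path_single)
next
  case (step x y)
  obtain Q where Q: "is_path E y v Q"
    and crosses: "f x \<noteq> f y \<or> set Q \<inter> stream_crossings E f \<noteq> {}"
    using step trancl_imp_is_path by metis
  have "is_path E x v ((x, y) # Q)" using Q step.hyps(1) by (rule is_path_ConsI)
  moreover have "set ((x, y) # Q) \<inter> stream_crossings E f \<noteq> {}"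
    using crosses step.hyps(1) by (auto simp: stream_crossings_def)
  ultimately show ?case by blast
qed

lemma safe_sync_stream_crossings:
  assumes "E' \<subseteq> E" and "E \<subseteq> E'\<^sup>+"
  shows "safe_sync E f (stream_crossings E' f)"
  unfolding safe_sync_def
proof (intro conjI ballI)
  show "stream_crossings E' f \<subseteq> E"
    using assms(1) by (auto simp: stream_crossings_def)
  fix e assume "e \<in> E"
  then obtain u v where e: "e = (u, v)" "(u, v) \<in> E'\<^sup>+" using assms(2) by (cases e) auto
  show "case e of (u, v) \<Rightarrow> f u = f v \<or> (\<exists>P. is_path E u v P \<and> set P \<inter> stream_crossings E' f \<noteq> {})"
    using e trancl_path_crossing[OF e(2), of f] is_path_mono[OF _ assms(1)] by blast
qed

lemma stream_crossings_subset_safe_sync: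
  assumes "E' \<subseteq> E" and unique: "\<And>u v P. (u, v) \<in> E' \<Longrightarrow> is_path E u v P \<Longrightarrow> P = [(u, v)]"
    and "safe_sync E f L"
  shows "stream_crossings E' f \<subseteq> L"
proof
  fix e assume "e \<in> stream_crossings E' f"
  then obtain u v where e: "e = (u, v)" "(u, v) \<in> E'" "f u \<noteq> f v"
    by (auto simp: stream_crossings_def)
  then obtain P where "is_path E u v P" "set P \<inter> L \<noteq> {}"
    using assms(1,3) unfolding safe_sync_def by blast
  then show "e \<in> L" using unique e by fastforce
qed

lemma min_sync_eqI:
  assumes "finite E" "safe_sync E f C" "\<And>L. safe_sync E f L \<Longrightarrow> C \<subseteq> L"
  shows "min_sync E f = card C"
  unfolding min_sync_def
proof (rule Min_eqI)
  have "{card L |L. safe_sync E f L} \<subseteq> card ` Pow E" by (auto simp: safe_sync_def)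
  then show "finite {card L |L. safe_sync E f L}" using assms(1) finite_subset by blast
  show "card C \<in> {card L |L. safe_sync E f L}" using assms(2) by blast
  fix n assume "n \<in> {card L |L. safe_sync E f L}"
  then obtain L where "n = card L" "safe_sync E f L" by blast
  moreover from this have "finite L"
    using assms(1) finite_subset unfolding safe_sync_def by blast
  ultimately show "card C \<le> n" using assms(3) card_mono by blast
qed

theorem mainTheorem4:
  fixes V :: "'a set" and E E' :: "('a \<times> 'a) set" and S :: "'s set" and f :: "'a \<Rightarrow> 's"
  assumes "finite_dag V E"
    and "is_MEG E E'"
    and "f ` V \<subseteq> S"
    and "max_logical_concurrency V E f"
  shows "min_sync E f = min_sync E' f"
proof -
  from assms(1) have "finite E" "acyclic E"
    unfolding finite_dag_def by (auto intro: finite_subset[OF _ finite_cartesian_product])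
  note E' = is_MEG_trancl[OF assms(2)]
  have "finite E'" using \<open>finite E\<close> E'(1) by (rule finite_subset[rotated])
  have unique: "P = [(u, v)]" if "(u, v) \<in> E'" "is_path E u v P" for u v P
    using MEG_edge_unique_path[OF \<open>acyclic E\<close> \<open>finite E\<close> assms(2) that] .
  have unique': "P = [(u, v)]" if "(u, v) \<in> E'" "is_path E' u v P" for u v P
    using unique[OF that(1) is_path_mono[OF that(2) E'(1)]] .
  let ?C = "stream_crossings E' f"
  have "min_sync E f = card ?C"
  proof (rule min_sync_eqI[OF \<open>finite E\<close>])
    show "safe_sync E f ?C" using E'(1,2) by (intro safe_sync_stream_crossings) auto
    show "safe_sync E f L \<Longrightarrow> ?C \<subseteq> L" for L
      by (rule stream_crossings_subset_safe_sync[OF E'(1) unique])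
  qed
  moreover have "min_sync E' f = card ?C"
  proof (rule min_sync_eqI[OF \<open>finite E'\<close>])
    show "safe_sync E' f ?C" by (intro safe_sync_stream_crossings) auto
    show "safe_sync E' f L \<Longrightarrow> ?C \<subseteq> L" for L
      by (rule stream_crossings_subset_safe_sync[OF order_refl unique'])
  qed
  ultimately show ?thesis by simp
qed

end
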